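(* Let $n\ge 2$. Let $\hat a_{i,i-1}>0$ and $\hat b_{i,i-1}\in\mathbb{R}$ for $2\le i\le n$, and for $1\le m\le k\le n$ put $\hat a_{k,m}:=\prod_{i=m+1}^{k}\hat a_{i,i-1}$ (so $\hat a_{k,k}=1$). Let $L_i\in\mathbb{R}$ ($2\le i\le n$) and $R_i\in\mathbb{R}$ ($1\le i\le n-1$) satisfy $L_i=\hat a_{i,i-1}R_{i-1}+\hat b_{i,i-1}$ for $2\le i\le n$, and $L_i\le R_i$ for $2\le i\le n-1$. Suppose $\hat a_{j,1}=\prod_{i=2}^{j}\hat a_{i,i-1}\ge 1$ for all $2\le j\le n$. Then $$\sum_{i=2}^{n}\bigl(L_i-R_{i-1}\bigr)\le \frac{\hat a_{n,1}-1}{\hat a_{n,1}}\,L_n+\sum_{i=2}^{n}\frac{\hat b_{i,i-1}}{\hat a_{i,1}}.$$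
   Context: Setting: a timing packet traverses a chain of nodes $1,2,\ldots,n$. Node $i$ ($2\le i\le n$) records a receive time-stamp $L_i=\tau^{i,l}(t_{i,l})$ and node $i$ ($1\le i\le n-1$) a send time-stamp $R_i=\tau^{i,r}(t_{i,r})$, where the "left" and "right" clocks of intermediate nodes are arbitrary functions. The numbers $\hat a_{i,i-1},\hat b_{i,i-1}$ are the declared relative skews and offsets between adjacent nodes; the relation $L_i=\hat a_{i,i-1}R_{i-1}+\hat b_{i,i-1}$ is the skew-consistency condition, and $L_i\le R_i$ expresses causality (a node cannot forward before receiving). *)

theory Defs
  imports Complex_Main
begin

text \<open>a i stands for the relative skew between nodes i and i-1 (for 2 <= i <= n).
  The cumulative skew from node m to node k (m <= k) is the product over i = m+1..k.\<close>
definition ahat :: "(nat \<Rightarrow> real) \<Rightarrow> nat \<Rightarrow> nat \<Rightarrow> real" where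
  "ahat a k m = (\<Prod>i = m + 1..k. a i)"

end

theory Submission
  imports Defs
begin

text \<open>Write \<open>A\<^sub>m = ahat a m 1\<close> and \<open>S\<^sub>m\<close> for the left-hand side summed up to \<open>m\<close>.
  By induction on \<open>m\<close>, \<open>S\<^sub>m \<le> (A\<^sub>m - 1)/A\<^sub>m L\<^sub>m + \<Sum>\<^sub>i\<^sub>\<le>\<^sub>m b\<^sub>i/A\<^sub>i\<close>. Passing from \<open>m\<close>
  to \<open>m + 1\<close>, causality \<open>L\<^sub>m \<le> R\<^sub>m\<close> together with \<open>A\<^sub>m \<ge> 1\<close> lets us replace
  \<open>L\<^sub>m\<close> by \<open>R\<^sub>m\<close> in the bound, and the skew-consistency relation
  \<open>R\<^sub>m = (L\<^sub>m\<^sub>+\<^sub>1 - b\<^sub>m\<^sub>+\<^sub>1)/a\<^sub>m\<^sub>+\<^sub>1\<close> turns \<open>-R\<^sub>m/A\<^sub>m\<close> into the new terms with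
  \<open>A\<^sub>m\<^sub>+\<^sub>1 = A\<^sub>m a\<^sub>m\<^sub>+\<^sub>1\<close>.\<close>

lemma ahat_self [simp]: "ahat a m m = 1"
  unfolding ahat_def by simp

lemma ahat_Suc: "m \<le> k \<Longrightarrow> ahat a (Suc k) m = ahat a k m * a (Suc k)"
  unfolding ahat_def by (simp add: prod.nat_ivl_Suc' mult.commute)

lemma skew_bound_step:
  fixes A a' b' L R L' :: real
  assumes "A \<ge> 1" and "a' > 0" and "L \<le> R" and "L' = a' * R + b'"
  shows "(A - 1) / A * L + (L' - R) \<le> (A * a' - 1) / (A * a') * L' + b' / (A * a')"
proof -
  have "(A - 1) / A * L - R \<le> - R / A"
  proof -
    have "(A - 1) / A * L - R - (- R / A) = (A - 1) * (L - R) / A"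
      using assms(1) by (simp add: field_simps)
    also have "\<dots> \<le> 0"
      using assms(1,3) by (simp add: divide_nonpos_pos mult_nonneg_nonpos)
    finally show ?thesis by simp
  qed
  also have "- R / A = (A * a' - 1) / (A * a') * L' + b' / (A * a') - L'"
    using assms(1,2,4) by (simp add: field_simps)
  finally show ?thesis by simp
qed

theorem lemma1:
  fixes n :: nat and a b L R :: "nat \<Rightarrow> real"
  assumes n2: "n \<ge> 2"
    and apos: "\<And>i. 2 \<le> i \<Longrightarrow> i \<le> n \<Longrightarrow> a i > 0"
    and skew: "\<And>i. 2 \<le> i \<Longrightarrow> i \<le> n \<Longrightarrow> L i = a i * R (i - 1) + b i"
    and caus: "\<And>i. 2 \<le> i \<Longrightarrow> i \<le> n - 1 \<Longrightarrow> L i \<le> R i"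
    and ge1: "\<And>j. 2 \<le> j \<Longrightarrow> j \<le> n \<Longrightarrow> ahat a j 1 \<ge> 1"
  shows "(\<Sum>i = 2..n. L i - R (i - 1))
           \<le> (ahat a n 1 - 1) / ahat a n 1 * L n + (\<Sum>i = 2..n. b i / ahat a i 1)"
  using n2 order.refl[of n]
proof (induction n rule: dec_induct)
  case base
  have "L 2 - R 1 \<le> (ahat a 2 1 - 1) / ahat a 2 1 * L 2 + b 2 / ahat a 2 1"
    using skew_bound_step[of 1 "a 2" "R 1" "R 1" "L 2" "b 2"] apos[of 2] skew[of 2] n2
    by (simp add: ahat_Suc[of 1 1, simplified] numeral_2_eq_2)
  then show ?case by simp
next
  case (step m)
  have "(\<Sum>i = 2..Suc m. L i - R (i - 1))
      \<le> (ahat a m 1 - 1) / ahat a m 1 * L m + (\<Sum>i = 2..m. b i / ahat a i 1) + (L (Suc m) - R m)"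
    using step by (simp add: sum.nat_ivl_Suc')
  also have "\<dots> \<le> (ahat a (Suc m) 1 - 1) / ahat a (Suc m) 1 * L (Suc m)
      + (\<Sum>i = 2..m. b i / ahat a i 1) + b (Suc m) / ahat a (Suc m) 1"
    using skew_bound_step[of "ahat a m 1" "a (Suc m)" "L m" "R m" "L (Suc m)" "b (Suc m)"]
      ge1[of m] apos[of "Suc m"] caus[of m] skew[of "Suc m"] step ahat_Suc[of 1 m a]
    by simp
  also have "\<dots> = (ahat a (Suc m) 1 - 1) / ahat a (Suc m) 1 * L (Suc m)
      + (\<Sum>i = 2..Suc m. b i / ahat a i 1)"
    using step by (simp add: sum.nat_ivl_Suc')
  finally show ?case .
qed

end
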